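(* Let $I$ be a nonempty set and let $A$ be a topologically independent subset of $(\mathbb{C}^\times)^I$. Then for every $i\in I$ the set $\{a\in A : a(i)\neq 1\}$ is finite.
   Context: $\mathbb{C}^\times$ is the multiplicative group of nonzero complex numbers with the Euclidean topology; $(\mathbb{C}^\times)^I$ carries the product topology and coordinatewise multiplication, with neutral element $e$ the constant function $1$. A subset $A$ of an abelian topological group $G$ (multiplicative notation, neutral element $e$) is topologically independent if $e\notin A$ and for every neighborhood $W$ of $e$ there is a neighborhood $U$ of $e$ such that for every finite $F\subseteq A$ and every family of integers $\{z_a: a\in F\}$, the condition $\prod_{a\in F}a^{z_a}\in U$ implies $a^{z_a}\in W$ for all $a\in F$. *)

theory Defs
  imports "HOL-Analysis.Analysis"
begin

text \<open>The group (C^x)^I, with the index set I represented by a type 'i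
  (types are nonempty). Elements are functions 'i => complex with nonzero
  values; the topology is the subspace topology of the product topology
  (the library instance on function spaces), multiplication is pointwise.\<close>

definition CstarI :: "('i \<Rightarrow> complex) set" where
  "CstarI = {f. \<forall>i. f i \<noteq> 0}"

definition unitI :: "'i \<Rightarrow> complex" where
  "unitI = (\<lambda>i. 1)"

definition nhd_unit :: "('i \<Rightarrow> complex) set \<Rightarrow> bool" where
  "nhd_unit W \<longleftrightarrow> W \<subseteq> CstarI \<and> (\<exists>V. open V \<and> unitI \<in> V \<and> V \<inter> CstarI \<subseteq> W)"

definition gpow :: "('i \<Rightarrow> complex) \<Rightarrow> int \<Rightarrow> ('i \<Rightarrow> complex)" where
  "gpow a z = (\<lambda>i. (a i) powi z)"

definition gprod :: "('i \<Rightarrow> complex) set \<Rightarrow> (('i \<Rightarrow> complex) \<Rightarrow> int) \<Rightarrow> ('i \<Rightarrow> complex)" where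
  "gprod F z = (\<lambda>i. \<Prod>a\<in>F. (a i) powi (z a))"

definition top_independent :: "('i \<Rightarrow> complex) set \<Rightarrow> bool" where
  "top_independent A \<longleftrightarrow> A \<subseteq> CstarI \<and> unitI \<notin> A \<and>
     (\<forall>W. nhd_unit W \<longrightarrow> (\<exists>U. nhd_unit U \<and>
        (\<forall>F z. finite F \<and> F \<subseteq> A \<longrightarrow> gprod F z \<in> U \<longrightarrow> (\<forall>a\<in>F. gpow a (z a) \<in> W))))"

end

theory Submission
  imports Defs
begin

text \<open>Suppose infinitely many \<open>a \<in> A\<close> satisfy \<open>a i \<noteq> 1\<close>. Each of them has a power
  \<open>a\<^bsup>n a\<^esup>\<close> whose \<open>i\<close>-th coordinate stays at distance \<open>\<ge> 1/2\<close> from 1, so independence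
  (applied to the neighbourhood \<open>|f i - 1| < 1/2\<close>) forbids products containing the factor
  \<open>a\<^bsup>n a\<^esup>\<close> from being close to 1 on the finitely many coordinates \<open>J\<close> that a basic
  neighbourhood controls. But such products exist: the vectors \<open>n a * ln |a j|\<close>
  (\<open>j \<in> J\<close>) span a finite-dimensional space, spanned by those of a finite subset \<open>Q\<close>;
  dividing \<open>a\<^bsup>n a\<^esup>\<close> by integral powers of the elements of \<open>Q\<close> (the integer parts of the
  coefficients) leaves infinitely many elements in a compact annulus on \<open>J\<close>, two of
  which are close, and their quotient is the required product.\<close>

lemma open_fun_contains_finite_box:
  fixes V :: "('i \<Rightarrow> 'b::metric_space) set"
  assumes "open V" "x \<in> V"
  obtains J \<delta> where "finite J" "\<delta> > 0" "\<And>f. \<forall>j\<in>J. dist (f j) (x j) < \<delta> \<Longrightarrow> f \<in> V"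
proof -
  obtain X where x: "x \<in> (\<Pi>\<^sub>E i\<in>UNIV. X i)" and X_open: "\<And>i. open (X i)"
    and fin: "finite {i. X i \<noteq> UNIV}" and sub: "(\<Pi>\<^sub>E i\<in>UNIV. X i) \<subseteq> V"
    using product_topology_open_contains_basis[of "\<lambda>i. euclidean" UNIV V x] assms
    by (auto simp: open_fun_def)
  define J where "J = {i. X i \<noteq> UNIV}"
  have "\<exists>e>0. ball (x j) e \<subseteq> X j" for j
    using x X_open open_contains_ball by blast
  then obtain e where e_pos: "\<And>j. e j > 0" and e_ball: "\<And>j. ball (x j) (e j) \<subseteq> X j"
    by metis
  define \<delta> where "\<delta> = Min (insert 1 (e ` J))"
  show thesis
  proof
    show "finite J" using fin by (simp add: J_def)
    then show "\<delta> > 0" using e_pos by (simp add: \<delta>_def)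
    fix f assume f: "\<forall>j\<in>J. dist (f j) (x j) < \<delta>"
    have "f j \<in> X j" for j
    proof (cases "j \<in> J")
      case True
      then have "dist (x j) (f j) < e j"
        using f \<open>finite J\<close> by (fastforce simp: \<delta>_def dist_commute)
      then show ?thesis using e_ball[of j] by (auto simp: subset_iff)
    qed (simp add: J_def)
    then show "f \<in> V" using sub by auto
  qed
qed

lemma nhd_unit_coordinate_ball:
  fixes i :: 'i
  assumes "r > 0"
  shows "nhd_unit {f \<in> CstarI. cmod (f i - 1) < r}"
  unfolding nhd_unit_def
proof (intro conjI exI[of _ "{f. cmod (f i - 1) < r}"])
  show "open {f::'i \<Rightarrow> complex. cmod (f i - 1) < r}"
    by (intro open_Collect_less continuous_intros continuous_on_product_coordinates)
qed (use assms in \<open>auto simp: unitI_def\<close>)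

lemma power_far_from_one:
  fixes x :: "'a::real_normed_div_algebra"
  assumes "x \<noteq> 1"
  shows "\<exists>n. 1/2 \<le> norm (x ^ n - 1)"
proof (rule ccontr)
  assume "\<not> ?thesis"
  then have near: "norm (x ^ n - 1) < 1/2" for n by (simp add: not_le)
  define d where "d = norm (x - 1)"
  have "d > 0" using assms by (simp add: d_def)
  have grow: "(3/2)^k * d \<le> norm (x ^ (2^k) - 1)" for k
  proof (induction k)
    case (Suc k)
    define y where "y = x ^ (2^k)"
    \<comment> \<open>Squaring a point within 1/2 of 1 multiplies its distance to 1 by at least 3/2.\<close>
    have "2 = norm ((y + 1) - (y - 1))" by simp
    also have "\<dots> \<le> norm (y + 1) + norm (y - 1)" by (rule norm_triangle_ineq4)
    finally have "3/2 \<le> norm (y + 1)" using near[of "2^k"] by (simp add: y_def)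
    moreover have "x ^ (2 ^ Suc k) - 1 = (y - 1) * (y + 1)"
      by (simp add: y_def power_mult[symmetric] mult_2 power_add algebra_simps)
    ultimately have "norm (y - 1) * (3/2) \<le> norm (x ^ (2 ^ Suc k) - 1)"
      by (metis mult_left_mono norm_ge_zero norm_mult)
    with Suc.IH show ?case by (simp add: y_def)
  qed (simp add: d_def)
  obtain k where "1 / (2 * d) < (3/2::real)^k" using real_arch_pow[of "3/2" "1 / (2 * d)"] by auto
  then have "1/2 < (3/2)^k * d" using \<open>d > 0\<close> by (simp add: field_simps)
  with grow[of k] near[of "2^k"] show False by linarith
qed

lemma norm_divide_minus_one_le:
  fixes a b :: "'a::real_normed_field"
  assumes "r > 0" "r \<le> norm b"
  shows "norm (a / b - 1) \<le> dist a b / r"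
proof -
  have "norm b > 0" using assms by linarith
  then have "a / b - 1 = (a - b) / b" by (simp add: field_simps)
  then have "norm (a / b - 1) = dist a b / norm b" by (simp add: dist_norm norm_divide)
  also have "\<dots> \<le> dist a b / r"
    using assms \<open>norm b > 0\<close> by (intro divide_left_mono) auto
  finally show ?thesis .
qed

lemma gprod_mono_neutral:
  assumes "finite F" "G \<subseteq> F" "\<And>a. a \<in> F - G \<Longrightarrow> z a = 0"
  shows "gprod F z = gprod G z"
  unfolding gprod_def using assms by (intro ext prod.mono_neutral_right) auto

lemma gprod_diff:
  assumes "F \<subseteq> CstarI"
  shows "gprod F (\<lambda>a. z a - z' a) i = gprod F z i / gprod F z' i"
proof -
  have "gprod F (\<lambda>a. z a - z' a) i = (\<Prod>a\<in>F. a i powi z a / a i powi z' a)"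
    unfolding gprod_def using assms by (intro prod.cong refl power_int_diff) (auto simp: CstarI_def)
  then show ?thesis by (simp add: prod_dividef gprod_def)
qed

lemma gprod_in_CstarI: "finite F \<Longrightarrow> F \<subseteq> CstarI \<Longrightarrow> gprod F z \<in> CstarI"
  by (auto simp: CstarI_def gprod_def)

lemma norm_gprod:
  assumes "finite F" "F \<subseteq> CstarI"
  shows "cmod (gprod F z i) = exp (\<Sum>a\<in>F. of_int (z a) * ln (cmod (a i)))"
proof -
  have "cmod (a i powi z a) = exp (of_int (z a) * ln (cmod (a i)))" if "a \<in> F" for a
  proof -
    have "cmod (a i) = exp (ln (cmod (a i)))" using that assms(2) by (auto simp: CstarI_def)
    then show ?thesis by (metis exp_power_int norm_power_int)
  qed
  then show ?thesis using assms(1) by (simp add: gprod_def exp_sum prod_norm[symmetric])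
qed

lemma sum_insert_adjusted_coefficients:
  fixes c b v :: "'a \<Rightarrow> 'b::field"
  assumes "finite Q"
  shows "(\<Sum>q\<in>insert t Q. ((if q \<in> Q then c q - l * b q else 0) + (if q = t then l else 0)) * v q) =
    (\<Sum>q\<in>Q. c q * v q) - l * ((\<Sum>q\<in>Q. b q * v q) - v t)"
proof -
  have "(\<Sum>q\<in>insert t Q. ((if q \<in> Q then c q - l * b q else 0) + (if q = t then l else 0)) * v q) =
      (\<Sum>q\<in>insert t Q. if q \<in> Q then (c q - l * b q) * v q else 0) +
      (\<Sum>q\<in>insert t Q. if q = t then l * v q else 0)"
    unfolding sum.distrib[symmetric] by (intro sum.cong refl) (auto simp: distrib_right)
  also have "(\<Sum>q\<in>insert t Q. if q \<in> Q then (c q - l * b q) * v q else 0) = (\<Sum>q\<in>Q. (c q - l * b q) * v q)"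
    using assms by (intro sum.mono_neutral_cong_right) auto
  also have "(\<Sum>q\<in>insert t Q. if q = t then l * v q else 0) = l * v t"
    using assms by (simp add: sum.delta')
  finally show ?thesis by (simp add: algebra_simps sum_subtractf sum_distrib_left)
qed

lemma finite_spanning_subset:
  fixes u :: "'a \<Rightarrow> 'j \<Rightarrow> real"
  assumes "finite J"
  obtains Q c where "finite Q" "Q \<subseteq> S" "\<And>p j. p \<in> S \<Longrightarrow> j \<in> J \<Longrightarrow> u p j = (\<Sum>q\<in>Q. c p q * u q j)"
  using assms
proof (induction J arbitrary: thesis rule: finite_induct)
  case empty
  show ?case by (rule empty.prems[of "{}"]) auto
next
  case (insert j0 J)
  obtain Q c where Q: "finite Q" "Q \<subseteq> S"
    and c: "\<And>p j. p \<in> S \<Longrightarrow> j \<in> J \<Longrightarrow> u p j = (\<Sum>q\<in>Q. c p q * u q j)"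
    using insert.IH by blast
  define d where "d p = u p j0 - (\<Sum>q\<in>Q. c p q * u q j0)" for p
  show ?case
  proof (cases "\<forall>p\<in>S. d p = 0")
    case True
    then show ?thesis using Q c by (intro insert.prems[of Q c]) (auto simp: d_def)
  next
    case False
    then obtain t where t: "t \<in> S" "d t \<noteq> 0" by blast
    \<comment> \<open>Add \<open>d p / d t\<close> times the difference between \<open>u t\<close> and its representation:
      this vanishes on \<open>J\<close> and corrects the coordinate \<open>j0\<close>.\<close>
    define c' where
      "c' p q = (if q \<in> Q then c p q - d p / d t * c t q else 0) + (if q = t then d p / d t else 0)" for p q
    have c': "(\<Sum>q\<in>insert t Q. c' p q * u q j) =
        (\<Sum>q\<in>Q. c p q * u q j) - d p / d t * ((\<Sum>q\<in>Q. c t q * u q j) - u t j)" for p j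
      unfolding c'_def by (rule sum_insert_adjusted_coefficients[OF Q(1)])
    show ?thesis
    proof (rule insert.prems[of "insert t Q" c'])
      fix p j assume p: "p \<in> S" and "j \<in> insert j0 J"
      then consider "j = j0" | "j \<in> J" by blast
      then show "u p j = (\<Sum>q\<in>insert t Q. c' p q * u q j)"
      proof cases
        case 1
        have "(\<Sum>q\<in>Q. c t q * u q j0) - u t j0 = - d t" "u p j0 = (\<Sum>q\<in>Q. c p q * u q j0) + d p"
          by (simp_all add: d_def)
        with t(2) show ?thesis unfolding c' 1 by simp
      next
        case 2
        then show ?thesis unfolding c' using c[OF p 2] c[OF t(1) 2] by simp
      qed
    next
      show "finite (insert t Q)" using Q(1) by simp
    next
      show "insert t Q \<subseteq> S" using Q(2) t(1) by simp
    qed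
  qed
qed

lemma infinite_family_close_on_finite_set:
  fixes w :: "'a \<Rightarrow> 'j \<Rightarrow> 'b::metric_space"
  assumes "finite J" "infinite S" "compact K" "\<And>p j. p \<in> S \<Longrightarrow> j \<in> J \<Longrightarrow> w p j \<in> K" "e > 0"
  obtains S' where "S' \<subseteq> S" "infinite S'"
    "\<And>p p' j. p \<in> S' \<Longrightarrow> p' \<in> S' \<Longrightarrow> j \<in> J \<Longrightarrow> dist (w p j) (w p' j) < e"
  using assms(1,2,4)
proof (induction J arbitrary: S thesis rule: finite_induct)
  case empty
  show ?case by (rule empty.prems(1)[of S]) (use empty.prems(2) in auto)
next
  case (insert j0 J)
  obtain S' where S': "S' \<subseteq> S" "infinite S'"
    and close: "\<And>p p' j. p \<in> S' \<Longrightarrow> p' \<in> S' \<Longrightarrow> j \<in> J \<Longrightarrow> dist (w p j) (w p' j) < e"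
  proof (rule insert.IH[of S])
    show "infinite S" by (fact insert.prems(2))
    show "w p j \<in> K" if "p \<in> S" "j \<in> J" for p j using insert.prems(3) that by blast
  qed (rule that)
  obtain D where D_fin: "finite D" and D: "K \<subseteq> (\<Union>x\<in>D. ball x (e/2))"
  proof (rule compactE_image[OF assms(3), of K "\<lambda>x. ball x (e/2)"])
    show "K \<subseteq> (\<Union>x\<in>K. ball x (e/2))" using assms(5) by force
  qed auto
  have "\<forall>p\<in>S'. \<exists>x\<in>D. w p j0 \<in> ball x (e/2)"
  proof
    fix p assume "p \<in> S'"
    then have "w p j0 \<in> K" using S'(1) insert.prems(3) by blast
    with D show "\<exists>x\<in>D. w p j0 \<in> ball x (e/2)" by (simp add: subset_iff)
  qed
  from pigeonhole_infinite_rel[OF S'(2) D_fin this]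
  obtain x where x: "infinite {p\<in>S'. w p j0 \<in> ball x (e/2)}" by (elim bexE)
  show ?case
  proof (rule insert.prems(1))
    show "{p\<in>S'. w p j0 \<in> ball x (e/2)} \<subseteq> S" using S'(1) by blast
    show "infinite {p\<in>S'. w p j0 \<in> ball x (e/2)}" by (fact x)
    fix p p' j assume "p \<in> {p\<in>S'. w p j0 \<in> ball x (e/2)}" "p' \<in> {p\<in>S'. w p j0 \<in> ball x (e/2)}"
      "j \<in> insert j0 J"
    then show "dist (w p j) (w p' j) < e"
      using close dist_triangle_half_r[of x "w p j0" e "w p' j0"] by (auto simp: dist_commute)
  qed
qed

lemma bounded_reduction_mod_finite_subset:
  fixes S :: "('i \<Rightarrow> complex) set" and m :: "('i \<Rightarrow> complex) \<Rightarrow> int"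
  assumes "S \<subseteq> CstarI" "finite J"
  obtains Q e B where "finite Q" "Q \<subseteq> S"
    "\<And>p. p \<notin> Q \<Longrightarrow> e p p = m p"
    "\<And>p a. a \<notin> insert p Q \<Longrightarrow> e p a = 0"
    "\<And>p j. p \<in> S - Q \<Longrightarrow> j \<in> J \<Longrightarrow>
       exp (- B) \<le> cmod (gprod (insert p Q) (e p) j) \<and> cmod (gprod (insert p Q) (e p) j) \<le> exp B"
proof -
  define u where "u a j = of_int (m a) * ln (cmod (a j))" for a j
  obtain Q C where Q: "finite Q" "Q \<subseteq> S"
    and C: "\<And>p j. p \<in> S \<Longrightarrow> j \<in> J \<Longrightarrow> u p j = (\<Sum>q\<in>Q. C p q * u q j)"
    using finite_spanning_subset[OF assms(2), of S u] by blast
  \<comment> \<open>\<open>gprod (insert p Q) (e p)\<close> is \<open>p\<^bsup>m p\<^esup>\<close> divided by the powers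
    \<open>q\<^bsup>\<lfloor>C p q\<rfloor> m q\<^esup>\<close>: on \<open>J\<close> its log-modulus is
    \<open>\<Sum>q\<in>Q. frac (C p q) * u q j\<close>, bounded independently of \<open>p\<close>.\<close>
  define e where "e p a = (if a = p then m p else 0) - (if a \<in> Q then \<lfloor>C p a\<rfloor> * m a else 0)" for p a
  define B where "B = (\<Sum>j\<in>J. \<Sum>q\<in>Q. \<bar>u q j\<bar>)"
  have e_self: "e p p = m p" if "p \<notin> Q" for p
    using that by (simp add: e_def)
  show thesis
  proof (rule that[OF Q, of e B])
    show "e p a = 0" if "a \<notin> insert p Q" for p a
      using that by (simp add: e_def)
    fix p j assume p: "p \<in> S - Q" and j: "j \<in> J"
    have "(\<Sum>q\<in>Q. of_int (e p q) * ln (cmod (q j))) = - (\<Sum>q\<in>Q. of_int \<lfloor>C p q\<rfloor> * u q j)"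
      using p by (auto simp: e_def u_def sum_negf[symmetric] intro!: sum.cong)
    then have "(\<Sum>a\<in>insert p Q. of_int (e p a) * ln (cmod (a j))) = u p j - (\<Sum>q\<in>Q. of_int \<lfloor>C p q\<rfloor> * u q j)"
      using p Q(1) by (simp add: e_self u_def)
    also have "\<dots> = (\<Sum>q\<in>Q. frac (C p q) * u q j)"
      using C[of p j] p j by (simp add: frac_def sum_subtractf left_diff_distrib)
    finally have norm_eq: "cmod (gprod (insert p Q) (e p) j) = exp (\<Sum>q\<in>Q. frac (C p q) * u q j)"
      using norm_gprod[of "insert p Q" "e p" j] Q p assms(1) by auto
    have "\<bar>\<Sum>q\<in>Q. frac (C p q) * u q j\<bar> \<le> (\<Sum>q\<in>Q. \<bar>u q j\<bar>)"
      by (rule order_trans[OF sum_abs sum_mono])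
         (simp add: abs_mult mult_left_le_one_le frac_lt_1 less_imp_le)
    also have "\<dots> \<le> B"
      unfolding B_def using j assms(2) by (intro member_le_sum) auto
    finally show "exp (- B) \<le> cmod (gprod (insert p Q) (e p) j) \<and> cmod (gprod (insert p Q) (e p) j) \<le> exp B"
      unfolding norm_eq by (simp add: abs_le_iff)
  qed (fact e_self)
qed

lemma gprod_near_unit_with_prescribed_exponent:
  fixes S :: "('i \<Rightarrow> complex) set" and m :: "('i \<Rightarrow> complex) \<Rightarrow> int"
  assumes "S \<subseteq> CstarI" "infinite S" "finite J" "\<delta> > 0"
  obtains F p z where "finite F" "F \<subseteq> S" "p \<in> F" "z p = m p"
    "\<And>j. j \<in> J \<Longrightarrow> cmod (gprod F z j - 1) < \<delta>"
proof -
  obtain Q B e where Q: "finite Q" "Q \<subseteq> S"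
    and e_self: "\<And>p. p \<notin> Q \<Longrightarrow> e p p = m p"
    and e_supp: "\<And>p a. a \<notin> insert p Q \<Longrightarrow> e p a = 0"
    and bounds: "\<And>p j. p \<in> S - Q \<Longrightarrow> j \<in> J \<Longrightarrow>
       exp (- B) \<le> cmod (gprod (insert p Q) (e p) j) \<and> cmod (gprod (insert p Q) (e p) j) \<le> exp B"
    using bounded_reduction_mod_finite_subset[OF assms(1,3), of m] by blast
  define w where "w p = gprod (insert p Q) (e p)" for p
  have "infinite (S - Q)" using assms(2) Q(1) by simp
  moreover have "w p j \<in> cball 0 (exp B)" if "p \<in> S - Q" "j \<in> J" for p j
    using bounds[OF that] by (simp add: w_def)
  ultimately obtain S' where S': "S' \<subseteq> S - Q" "infinite S'"
    and close: "\<And>p p' j. p \<in> S' \<Longrightarrow> p' \<in> S' \<Longrightarrow> j \<in> J \<Longrightarrow> dist (w p j) (w p' j) < \<delta> * exp (- B)"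
    using infinite_family_close_on_finite_set[OF assms(3) _ compact_cball, of "S - Q" w 0 "exp B" "\<delta> * exp (- B)"]
      assms(4) by auto
  obtain p where "p \<in> S'" using infinite_imp_nonempty[OF S'(2)] by blast
  moreover obtain p' where "p' \<in> S' - {p}" using infinite_imp_nonempty[of "S' - {p}"] S'(2) by auto
  ultimately have pp: "p \<in> S'" "p' \<in> S'" "p \<noteq> p'" by auto
  define F where "F = insert p (insert p' Q)"
  define z where "z = (\<lambda>a. e p a - e p' a)"
  have p_notin: "p \<notin> Q" "p' \<notin> Q" using pp S'(1) by auto
  show thesis
  proof (rule that[of F p z])
    show "finite F" "F \<subseteq> S" "p \<in> F" using Q pp S'(1) by (auto simp: F_def)
    show "z p = m p" using e_self[OF p_notin(1)] e_supp[of p p'] pp p_notin by (simp add: z_def)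
    fix j assume j: "j \<in> J"
    have "F \<subseteq> CstarI" using \<open>F \<subseteq> S\<close> assms(1) by blast
    have "gprod F (e p) = w p" "gprod F (e p') = w p'"
      unfolding w_def using Q(1) e_supp by (auto simp: F_def intro!: gprod_mono_neutral)
    then have "gprod F z j = w p j / w p' j"
      unfolding z_def gprod_diff[OF \<open>F \<subseteq> CstarI\<close>] by simp
    have "exp (- B) \<le> cmod (w p' j)"
      using bounds[of p' j] pp S'(1) j by (auto simp: w_def)
    then have "cmod (gprod F z j - 1) \<le> dist (w p j) (w p' j) / exp (- B)"
      unfolding \<open>gprod F z j = w p j / w p' j\<close> by (intro norm_divide_minus_one_le) auto
    also have "\<dots> < \<delta>"
      using close[OF pp(1,2) j] by (simp add: divide_less_eq)
    finally show "cmod (gprod F z j - 1) < \<delta>" .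
  qed
qed

theorem lemma2p6:
  fixes A :: "('i \<Rightarrow> complex) set"
  assumes "top_independent A"
  shows "\<forall>i. finite {a\<in>A. a i \<noteq> 1}"
proof (intro allI, rule ccontr)
  fix i :: 'i
  define S where "S = {a\<in>A. a i \<noteq> 1}"
  assume "infinite {a\<in>A. a i \<noteq> 1}"
  then have "infinite S" by (simp add: S_def)
  define W where "W = {f \<in> CstarI. cmod (f i - 1) < 1/2}"
  have "S \<subseteq> CstarI" using assms by (auto simp: top_independent_def S_def)
  have "nhd_unit W" unfolding W_def by (rule nhd_unit_coordinate_ball) simp
  then obtain U where "nhd_unit U"
    and U: "\<forall>F z. finite F \<and> F \<subseteq> A \<longrightarrow> gprod F z \<in> U \<longrightarrow> (\<forall>a\<in>F. gpow a (z a) \<in> W)"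
    using assms unfolding top_independent_def by blast
  then obtain V where V: "open V" "unitI \<in> V" and "V \<inter> CstarI \<subseteq> U" by (auto simp: nhd_unit_def)
  obtain J \<delta> where "finite J" "\<delta> > 0" and box: "\<And>f. \<forall>j\<in>J. dist (f j) (unitI j) < \<delta> \<Longrightarrow> f \<in> V"
    by (rule open_fun_contains_finite_box[OF V]) (rule that)
  have "\<forall>a\<in>S. \<exists>k. 1/2 \<le> cmod (a i ^ k - 1)"
    using power_far_from_one by (auto simp: S_def)
  then obtain n where n: "\<And>a. a \<in> S \<Longrightarrow> 1/2 \<le> cmod (a i ^ n a - 1)" by metis
  obtain F p z where F: "finite F" "F \<subseteq> S" and "p \<in> F" "z p = int (n p)"
    and near: "\<And>j. j \<in> J \<Longrightarrow> cmod (gprod F z j - 1) < \<delta>"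
    using gprod_near_unit_with_prescribed_exponent[OF \<open>S \<subseteq> CstarI\<close> \<open>infinite S\<close> \<open>finite J\<close> \<open>\<delta> > 0\<close>,
        of "\<lambda>a. int (n a)"]
    by blast
  have "gprod F z \<in> V" using box near by (simp add: dist_norm unitI_def)
  moreover have "gprod F z \<in> CstarI" using F \<open>S \<subseteq> CstarI\<close> by (intro gprod_in_CstarI) auto
  ultimately have "gpow p (z p) \<in> W" using U F \<open>p \<in> F\<close> \<open>V \<inter> CstarI \<subseteq> U\<close> by (auto simp: S_def)
  then show False using n[of p] \<open>p \<in> F\<close> F \<open>z p = int (n p)\<close> by (auto simp: W_def gpow_def)
qed

end
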